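(* Let $(\beta,\lambda)\in\mathcal T$, $J\ge2$, and $0\le\eta<1-1/J$. Let $\bm\theta^*_{\beta,\lambda}$ be a global minimizer over $\Theta$ of the clean expected SD-loss $R_{\beta,\lambda}$ and $\bm\theta^\eta_{\beta,\lambda}$ a global minimizer over $\Theta$ of the noisy expected SD-loss $R^\eta_{\beta,\lambda}$ (both assumed to exist). Then $$0\le R_{\beta,\lambda}(\bm\theta^\eta_{\beta,\lambda})-R_{\beta,\lambda}(\bm\theta^*_{\beta,\lambda})\le M^{(\eta)}_{\beta,\lambda}:=\frac{\eta}{J-1-J\eta}\cdot\frac1A\Big(J-J^{1-\beta}+\frac{1+\beta}{B}\big|1-J^{1-B}\big|\Big).$$
   Context: $\ell_{\beta,\lambda}(\bm u,\bm p)=\frac1A\sum_{j=1}^J[p_j^{1+\beta}-\frac{1+\beta}{B}u_jp_j^B+\frac AB]$ with $A=1+\lambda(1-\beta)$, $B=\beta-\lambda(1-\beta)$, and $\mathcal T=\{(\beta,\lambda):0\le\beta<1,-\frac1{1-\beta}<\lambda<\frac\beta{1-\beta}\}\cup\{(1,\lambda):\lambda\in\mathbb R\}$ (so $A,B>0$). Features $\bm X\sim G_{\bm X}$; the clean one-hot label $\bm Y\in\{\bm e_1,\dots,\bm e_J\}$ given $\bm X=\bm x$ is Multinomial$(1;\bm p^*(\bm x))$. Under uniform label noise of level $\eta$, the observed label $\widetilde{\bm Y}$ given $\bm X=\bm x$ equals $\bm e_j$ with probability $(1-\eta)p_j^*(\bm x)+\frac{\eta}{J-1}(1-p_j^*(\bm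 x))$ (i.e. the true label is kept with probability $1-\eta$ and otherwise replaced uniformly by one of the other $J-1$ labels). $R_{\beta,\lambda}(\bm\theta)=E[\ell_{\beta,\lambda}(\bm Y,\bm p(\bm X;\bm\theta))]$ and $R^\eta_{\beta,\lambda}(\bm\theta)=E[\ell_{\beta,\lambda}(\widetilde{\bm Y},\bm p(\bm X;\bm\theta))]$, where $\bm p(\bm x;\bm\theta)\in\Delta_J$ are softmax network class probabilities, $\bm\theta\in\Theta$. *)

theory Defs
  imports "HOL-Probability.Probability"
begin

text \<open>Classes are indexed by 0..<J. Vectors in R^J are functions nat => real.\<close>

definition sdA :: "real \<Rightarrow> real \<Rightarrow> real" where
  "sdA \<beta> lam = 1 + lam * (1 - \<beta>)"

definition sdB :: "real \<Rightarrow> real \<Rightarrow> real" where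
  "sdB \<beta> lam = \<beta> - lam * (1 - \<beta>)"

definition in_T :: "real \<Rightarrow> real \<Rightarrow> bool" where
  "in_T \<beta> lam \<longleftrightarrow>
     (0 \<le> \<beta> \<and> \<beta> < 1 \<and> - 1 / (1 - \<beta>)  < lam \<and> lam < \<beta> / (1 - \<beta>)) \<or> \<beta> = 1"

definition sd_loss :: "real \<Rightarrow> real \<Rightarrow> nat \<Rightarrow> (nat \<Rightarrow> real) \<Rightarrow> (nat \<Rightarrow> real) \<Rightarrow> real" where
  "sd_loss \<beta> lam J u p = (1 / sdA \<beta> lam) *
     (\<Sum>j<J. p j powr (1 + \<beta>) - (1 + \<beta>) / sdB \<beta> lam * u j * p j powr (sdB \<beta> lam)
            + sdA \<beta> lam / sdB \<beta> lam)"

definition onehot :: "nat \<Rightarrow> nat \<Rightarrow> real" where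
  "onehot j = (\<lambda>k. if k = j then 1 else 0)"

definition softmax :: "nat \<Rightarrow> (nat \<Rightarrow> real) \<Rightarrow> nat \<Rightarrow> real" where
  "softmax J z = (\<lambda>j. exp (z j) / (\<Sum>k<J. exp (z k)))"

definition in_simplex :: "nat \<Rightarrow> (nat \<Rightarrow> real) \<Rightarrow> bool" where
  "in_simplex J q \<longleftrightarrow> (\<forall>j<J. 0 \<le> q j) \<and> (\<Sum>j<J. q j) = 1"

text \<open>Conditional label distribution under uniform label noise of level eta.\<close>
definition noisy_prob :: "nat \<Rightarrow> real \<Rightarrow> (nat \<Rightarrow> real) \<Rightarrow> nat \<Rightarrow> real" where
  "noisy_prob J \<eta> q = (\<lambda>j. (1 - \<eta>) * q j + \<eta> / (real J - 1) * (1 - q j))"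

text \<open>Expected loss E[ell(Y, p(X))] where X ~ G and Y | X = x ~ Multinomial(1; q(x)).\<close>
definition exp_loss :: "real \<Rightarrow> real \<Rightarrow> nat \<Rightarrow> 'x measure \<Rightarrow> ('x \<Rightarrow> nat \<Rightarrow> real)
     \<Rightarrow> ('x \<Rightarrow> nat \<Rightarrow> real) \<Rightarrow> real" where
  "exp_loss \<beta> lam J G q p = (\<integral>x. (\<Sum>j<J. q x j * sd_loss \<beta> lam J (onehot j) (p x)) \<partial>G)"

definition risk :: "real \<Rightarrow> real \<Rightarrow> nat \<Rightarrow> 'x measure \<Rightarrow> ('x \<Rightarrow> nat \<Rightarrow> real)
     \<Rightarrow> ('t \<Rightarrow> 'x \<Rightarrow> nat \<Rightarrow> real) \<Rightarrow> 't \<Rightarrow> real" where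
  "risk \<beta> lam J G pstar f \<theta> = exp_loss \<beta> lam J G pstar (\<lambda>x. softmax J (f \<theta> x))"

definition noisy_risk :: "real \<Rightarrow> real \<Rightarrow> nat \<Rightarrow> real \<Rightarrow> 'x measure \<Rightarrow> ('x \<Rightarrow> nat \<Rightarrow> real)
     \<Rightarrow> ('t \<Rightarrow> 'x \<Rightarrow> nat \<Rightarrow> real) \<Rightarrow> 't \<Rightarrow> real" where
  "noisy_risk \<beta> lam J \<eta> G pstar f \<theta> =
     exp_loss \<beta> lam J G (\<lambda>x. noisy_prob J \<eta> (pstar x)) (\<lambda>x. softmax J (f \<theta> x))"

definition excess_bound :: "real \<Rightarrow> real \<Rightarrow> nat \<Rightarrow> real \<Rightarrow> real" where
  "excess_bound \<beta> lam J \<eta> =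
     \<eta> / (real J - 1 - real J * \<eta>) * (1 / sdA \<beta> lam) *
     (real J - real J powr (1 - \<beta>)
      + (1 + \<beta>) / sdB \<beta> lam * \<bar>1 - real J powr (1 - sdB \<beta> lam)\<bar>)"

end

theory Submission
  imports Defs
begin

(* Uniform label noise turns the label distribution p* into the affine mixture c p* + a with
   a = eta/(J-1) and c = 1 - eta - a > 0, so the noisy risk is R^eta = c R + a S, where
   S(theta) = E[sum_j l(e_j, p(X;theta))]. Comparing R^eta at its minimiser theta_eta with the
   clean minimiser theta_0 gives c (R(theta_eta) - R(theta_0)) <= a (S(theta_0) - S(theta_eta)).
   The sum of the losses over all one-hot labels depends on p only through the power sums
   sum_k p_k^(1+beta) and sum_k p_k^B, and by Jensen's inequality every power sum sum_k p_k^r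
   lies between 1 and J^(1-r) on the simplex. This bounds the oscillation of S by
   sd_symmetry_gap, and a/c times that gap is the bound M. *)

lemma powr_concave:
  assumes "0 < r" "r \<le> 1" shows "concave_on {0<..} (\<lambda>x::real. x powr r)"
proof (rule f''_le0_imp_concave[where f' = "\<lambda>x. r * x powr (r - 1)"
      and f'' = "\<lambda>x. r * ((r - 1) * x powr (r - 1 - 1))"])
  fix x :: real assume "x \<in> {0<..}"
  then show "((\<lambda>x. x powr r) has_real_derivative r * x powr (r - 1)) (at x)"
    and "((\<lambda>x. r * x powr (r - 1)) has_real_derivative r * ((r - 1) * x powr (r - 1 - 1))) (at x)"
    by (auto intro!: derivative_eq_intros)
  show "r * ((r - 1) * x powr (r - 1 - 1)) \<le> 0"
    using assms by (intro mult_nonneg_nonpos mult_nonpos_nonneg) auto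
qed simp

lemma of_nat_mult_inverse_powr: "real J * (1 / real J) powr r = real J powr (1 - r)"
  by (cases "J = 0") (simp_all add: powr_diff powr_divide)

lemma powr_sum_bounds_ge_1:
  fixes p :: "nat \<Rightarrow> real"
  assumes J: "J \<ge> 1" and pos: "\<forall>j<J. 0 < p j" and sum: "(\<Sum>j<J. p j) = 1" and r: "1 \<le> r"
  shows "real J powr (1 - r) \<le> (\<Sum>j<J. p j powr r) \<and> (\<Sum>j<J. p j powr r) \<le> 1"
proof
  have "(1 / real J) powr r = (\<lambda>x. x powr r) (\<Sum>j<J. (1 / real J) *\<^sub>R p j)"
    by (simp add: sum_divide_distrib[symmetric] sum)
  also have "\<dots> \<le> (\<Sum>j<J. (1 / real J) * p j powr r)"
    by (rule convex_on_sum[OF _ _ powr_convex[OF r]])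
      (use J pos in \<open>auto simp: lessThan_empty_iff\<close>)
  finally have "real J * (1 / real J) powr r \<le> (\<Sum>j<J. p j powr r)"
    using J by (simp add: sum_divide_distrib[symmetric] le_divide_eq mult.commute)
  then show "real J powr (1 - r) \<le> (\<Sum>j<J. p j powr r)"
    by (simp add: of_nat_mult_inverse_powr)
  have "p j \<le> 1" if "j < J" for j
    using member_le_sum[of j "{..<J}" p] pos sum that by (auto simp: less_imp_le)
  then have "(\<Sum>j<J. p j powr r) \<le> (\<Sum>j<J. p j)"
    using pos r by (intro sum_mono powr_le_one_le) auto
  then show "(\<Sum>j<J. p j powr r) \<le> 1" using sum by simp
qed

lemma powr_sum_bounds_le_1:
  fixes p :: "nat \<Rightarrow> real"
  assumes J: "J \<ge> 1" and pos: "\<forall>j<J. 0 < p j" and sum: "(\<Sum>j<J. p j) = 1"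
    and r: "0 < r" "r \<le> 1"
  shows "1 \<le> (\<Sum>j<J. p j powr r) \<and> (\<Sum>j<J. p j powr r) \<le> real J powr (1 - r)"
proof
  have "p j \<le> 1" if "j < J" for j
    using member_le_sum[of j "{..<J}" p] pos sum that by (auto simp: less_imp_le)
  then have "(\<Sum>j<J. p j) \<le> (\<Sum>j<J. p j powr r)"
    using pos r powr_mono'[of r 1] by (intro sum_mono) (metis lessThan_iff less_imp_le powr_one)
  then show "1 \<le> (\<Sum>j<J. p j powr r)" using sum by simp
  have "(\<Sum>j<J. (1 / real J) * p j powr r) \<le> (\<lambda>x. x powr r) (\<Sum>j<J. (1 / real J) *\<^sub>R p j)"
    by (rule concave_on_sum[OF _ _ powr_concave[OF r]])
      (use J pos in \<open>auto simp: lessThan_empty_iff\<close>)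
  also have "\<dots> = (1 / real J) powr r"
    by (simp add: sum_divide_distrib[symmetric] sum)
  finally have "(\<Sum>j<J. p j powr r) \<le> real J * (1 / real J) powr r"
    using J by (simp add: sum_divide_distrib[symmetric] divide_le_eq mult.commute)
  then show "(\<Sum>j<J. p j powr r) \<le> real J powr (1 - r)"
    by (simp add: of_nat_mult_inverse_powr)
qed

lemma abs_diff_powr_sums_le:
  fixes p q :: "nat \<Rightarrow> real"
  assumes J: "J \<ge> 1" and p: "\<forall>j<J. 0 < p j" "(\<Sum>j<J. p j) = 1"
    and q: "\<forall>j<J. 0 < q j" "(\<Sum>j<J. q j) = 1" and r: "0 < r"
  shows "\<bar>(\<Sum>j<J. p j powr r) - (\<Sum>j<J. q j powr r)\<bar> \<le> \<bar>1 - real J powr (1 - r)\<bar>"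
proof (cases "1 \<le> r")
  case True
  then show ?thesis
    using powr_sum_bounds_ge_1[OF J p True] powr_sum_bounds_ge_1[OF J q True] by linarith
next
  case False
  then show ?thesis
    using powr_sum_bounds_le_1[OF J p r] powr_sum_bounds_le_1[OF J q r] False by linarith
qed

lemma sd_loss_onehot:
  assumes "j < J"
  shows "sd_loss \<beta> lam J (onehot j) p = ((\<Sum>k<J. p k powr (1 + \<beta>))
     - (1 + \<beta>) / sdB \<beta> lam * p j powr sdB \<beta> lam + real J * (sdA \<beta> lam / sdB \<beta> lam)) / sdA \<beta> lam"
proof -
  have "(\<Sum>k<J. (1 + \<beta>) / sdB \<beta> lam * onehot j k * p k powr sdB \<beta> lam)
      = (1 + \<beta>) / sdB \<beta> lam * p j powr sdB \<beta> lam"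
    using assms by (simp add: onehot_def if_distrib if_distribR cong: if_cong)
  then show ?thesis
    unfolding sd_loss_def by (simp add: sum.distrib sum_subtractf)
qed

definition onehot_loss_sum :: "real \<Rightarrow> real \<Rightarrow> nat \<Rightarrow> (nat \<Rightarrow> real) \<Rightarrow> real" where
  "onehot_loss_sum \<beta> lam J p = (\<Sum>j<J. sd_loss \<beta> lam J (onehot j) p)"

lemma onehot_loss_sum_eq:
  "onehot_loss_sum \<beta> lam J p = (real J * (\<Sum>k<J. p k powr (1 + \<beta>))
     - (1 + \<beta>) / sdB \<beta> lam * (\<Sum>k<J. p k powr sdB \<beta> lam)
     + real J * real J * (sdA \<beta> lam / sdB \<beta> lam)) / sdA \<beta> lam"
  unfolding onehot_loss_sum_def
  by (simp add: sd_loss_onehot sum_divide_distrib[symmetric] sum.distrib sum_subtractf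
      sum_distrib_left[symmetric])

definition sd_symmetry_gap :: "real \<Rightarrow> real \<Rightarrow> nat \<Rightarrow> real" where
  "sd_symmetry_gap \<beta> lam J = (real J - real J powr (1 - \<beta>)
     + (1 + \<beta>) / sdB \<beta> lam * \<bar>1 - real J powr (1 - sdB \<beta> lam)\<bar>) / sdA \<beta> lam"

lemma onehot_loss_sum_diff_le:
  fixes p q :: "nat \<Rightarrow> real"
  assumes J: "J \<ge> 1" and \<beta>: "0 \<le> \<beta>" and A: "0 < sdA \<beta> lam" and B: "0 < sdB \<beta> lam"
    and p: "\<forall>j<J. 0 < p j" "(\<Sum>j<J. p j) = 1"
    and q: "\<forall>j<J. 0 < q j" "(\<Sum>j<J. q j) = 1"
  shows "onehot_loss_sum \<beta> lam J p - onehot_loss_sum \<beta> lam J q \<le> sd_symmetry_gap \<beta> lam J"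
proof -
  define c where "c = (1 + \<beta>) / sdB \<beta> lam"
  define P where "P = (\<lambda>r. \<Sum>k<J. p k powr r)"
  define Q where "Q = (\<lambda>r. \<Sum>k<J. q k powr r)"
  have "c \<ge> 0" using \<beta> B by (simp add: c_def)
  have "1 \<le> real J powr \<beta>"
    using J \<beta> by (intro ge_one_powr_ge_zero) auto
  then have "real J powr (- \<beta>) \<le> 1"
    by (simp add: powr_minus inverse_le_1_iff)
  then have "P (1 + \<beta>) - Q (1 + \<beta>) \<le> 1 - real J powr (- \<beta>)"
    using abs_diff_powr_sums_le[OF J p q, of "1 + \<beta>"] \<beta> by (simp add: P_def Q_def)
  then have "real J * (P (1 + \<beta>) - Q (1 + \<beta>)) \<le> real J * (1 - real J powr (- \<beta>))"
    by (rule mult_left_mono) simp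
  also have "\<dots> = real J - real J powr (1 - \<beta>)"
    using J powr_add[of "real J" 1 "- \<beta>"] by (simp add: right_diff_distrib)
  finally have first: "real J * (P (1 + \<beta>) - Q (1 + \<beta>)) \<le> real J - real J powr (1 - \<beta>)" .
  have "Q (sdB \<beta> lam) - P (sdB \<beta> lam) \<le> \<bar>1 - real J powr (1 - sdB \<beta> lam)\<bar>"
    using abs_diff_powr_sums_le[OF J p q B] by (simp add: P_def Q_def)
  then have second: "c * (Q (sdB \<beta> lam) - P (sdB \<beta> lam)) \<le> c * \<bar>1 - real J powr (1 - sdB \<beta> lam)\<bar>"
    using \<open>c \<ge> 0\<close> by (rule mult_left_mono)
  define K where "K = real J * real J * (sdA \<beta> lam / sdB \<beta> lam)"
  have "onehot_loss_sum \<beta> lam J p - onehot_loss_sum \<beta> lam J q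
      = ((real J * P (1 + \<beta>) - c * P (sdB \<beta> lam) + K)
        - (real J * Q (1 + \<beta>) - c * Q (sdB \<beta> lam) + K)) / sdA \<beta> lam"
    unfolding onehot_loss_sum_eq P_def Q_def c_def K_def by (rule diff_divide_distrib[symmetric])
  also have "\<dots> = (real J * (P (1 + \<beta>) - Q (1 + \<beta>)) + c * (Q (sdB \<beta> lam) - P (sdB \<beta> lam)))
      / sdA \<beta> lam"
    by (simp add: algebra_simps)
  also have "\<dots> \<le> sd_symmetry_gap \<beta> lam J"
    unfolding sd_symmetry_gap_def c_def[symmetric]
    using A by (intro divide_right_mono add_mono first second) simp
  finally show ?thesis .
qed

lemma softmax_pos: "J \<ge> 1 \<Longrightarrow> 0 < softmax J z j"
  unfolding softmax_def by (intro divide_pos_pos) (auto intro!: sum_pos simp: lessThan_empty_iff)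

lemma sum_softmax: "J \<ge> 1 \<Longrightarrow> (\<Sum>j<J. softmax J z j) = 1"
  unfolding softmax_def
  by (simp add: sum_divide_distrib[symmetric] sum_pos lessThan_empty_iff less_imp_neq[symmetric])

lemma in_simplex_bounds: "in_simplex J p \<Longrightarrow> j < J \<Longrightarrow> 0 \<le> p j \<and> p j \<le> 1"
  unfolding in_simplex_def using member_le_sum[of j "{..<J}" p] by auto

lemma abs_sd_loss_le:
  assumes u: "\<forall>k<J. \<bar>u k\<bar> \<le> 1" and p: "\<forall>k<J. 0 \<le> p k \<and> p k \<le> 1"
    and \<beta>: "0 \<le> 1 + \<beta>" and B: "0 \<le> sdB \<beta> lam"
  shows "\<bar>sd_loss \<beta> lam J u p\<bar>
    \<le> real J * (1 + \<bar>(1 + \<beta>) / sdB \<beta> lam\<bar> + \<bar>sdA \<beta> lam / sdB \<beta> lam\<bar>) / \<bar>sdA \<beta> lam\<bar>"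
proof -
  have "\<bar>p k powr (1 + \<beta>) - (1 + \<beta>) / sdB \<beta> lam * u k * p k powr sdB \<beta> lam + sdA \<beta> lam / sdB \<beta> lam\<bar>
      \<le> 1 + \<bar>(1 + \<beta>) / sdB \<beta> lam\<bar> + \<bar>sdA \<beta> lam / sdB \<beta> lam\<bar>" if "k < J" for k
  proof -
    have "\<bar>p k powr (1 + \<beta>)\<bar> \<le> 1" "\<bar>p k powr sdB \<beta> lam\<bar> \<le> 1"
      using p that \<beta> B by (auto intro: powr_le1)
    moreover have "\<bar>u k\<bar> \<le> 1" using u that by simp
    ultimately have "\<bar>u k * p k powr sdB \<beta> lam\<bar> \<le> 1"
      by (simp add: abs_mult mult_le_one)
    then have "\<bar>(1 + \<beta>) / sdB \<beta> lam * u k * p k powr sdB \<beta> lam\<bar> \<le> \<bar>(1 + \<beta>) / sdB \<beta> lam\<bar>"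
      by (simp only: mult.assoc abs_mult mult_left_le abs_ge_zero)
    with \<open>\<bar>p k powr (1 + \<beta>)\<bar> \<le> 1\<close> show ?thesis by linarith
  qed
  then have bound: "\<bar>\<Sum>k<J. p k powr (1 + \<beta>) - (1 + \<beta>) / sdB \<beta> lam * u k * p k powr sdB \<beta> lam
      + sdA \<beta> lam / sdB \<beta> lam\<bar> \<le> real J * (1 + \<bar>(1 + \<beta>) / sdB \<beta> lam\<bar> + \<bar>sdA \<beta> lam / sdB \<beta> lam\<bar>)"
    by (intro order_trans[OF sum_abs] sum_bounded_above[of "{..<J}", simplified]) auto
  have eq: "\<bar>sd_loss \<beta> lam J u p\<bar>
      = \<bar>\<Sum>k<J. p k powr (1 + \<beta>) - (1 + \<beta>) / sdB \<beta> lam * u k * p k powr sdB \<beta> lam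
      + sdA \<beta> lam / sdB \<beta> lam\<bar> / \<bar>sdA \<beta> lam\<bar>"
    unfolding sd_loss_def by (simp add: abs_mult)
  show ?thesis
    unfolding eq by (rule divide_right_mono[OF bound abs_ge_zero])
qed

lemma borel_measurable_sd_loss:
  assumes p: "\<forall>k<J. (\<lambda>x. p x k) \<in> borel_measurable M"
  shows "(\<lambda>x. sd_loss \<beta> lam J u (p x)) \<in> borel_measurable M"
proof -
  have "(\<lambda>x. p x k powr (1 + \<beta>) - (1 + \<beta>) / sdB \<beta> lam * u k * p x k powr sdB \<beta> lam
      + sdA \<beta> lam / sdB \<beta> lam) \<in> borel_measurable M" if "k < J" for k
  proof -
    have [measurable]: "(\<lambda>x. p x k) \<in> borel_measurable M" using p that by simp
    show ?thesis by measurable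
  qed
  then show ?thesis
    unfolding sd_loss_def by (auto intro!: borel_measurable_times[OF borel_measurable_const]
        borel_measurable_sum)
qed

lemma integrable_weighted_sd_loss_onehot:
  assumes G: "finite_measure G"
    and p: "\<forall>x\<in>space G. in_simplex J (p x)" "\<forall>j<J. (\<lambda>x. p x j) \<in> borel_measurable G"
    and q: "\<forall>x\<in>space G. \<forall>j<J. \<bar>q x j\<bar> \<le> 1" "\<forall>j<J. (\<lambda>x. q x j) \<in> borel_measurable G"
    and \<beta>: "0 \<le> 1 + \<beta>" and B: "0 \<le> sdB \<beta> lam"
  shows "integrable G (\<lambda>x. \<Sum>j<J. q x j * sd_loss \<beta> lam J (onehot j) (p x))"
proof (intro Bochner_Integration.integrable_sum)
  fix j assume "j \<in> {..<J}"
  define K where "K = real J * (1 + \<bar>(1 + \<beta>) / sdB \<beta> lam\<bar> + \<bar>sdA \<beta> lam / sdB \<beta> lam\<bar>) / \<bar>sdA \<beta> lam\<bar>"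
  have "\<bar>q x j * sd_loss \<beta> lam J (onehot j) (p x)\<bar> \<le> K" if "x \<in> space G" for x
  proof -
    have "\<bar>sd_loss \<beta> lam J (onehot j) (p x)\<bar> \<le> K"
      unfolding K_def using in_simplex_bounds p(1) that \<beta> B
      by (intro abs_sd_loss_le) (auto simp: onehot_def)
    then have "\<bar>q x j\<bar> * \<bar>sd_loss \<beta> lam J (onehot j) (p x)\<bar> \<le> 1 * K"
      using q(1) that \<open>j \<in> {..<J}\<close> by (intro mult_mono) auto
    then show ?thesis by (simp add: abs_mult)
  qed
  then show "integrable G (\<lambda>x. q x j * sd_loss \<beta> lam J (onehot j) (p x))"
    using \<open>j \<in> {..<J}\<close> p(2) q(2)
    by (intro finite_measure.integrable_const_bound[OF G, where B=K] AE_I2)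
      (auto intro!: borel_measurable_times borel_measurable_sd_loss)
qed

lemma borel_measurable_softmax:
  assumes z: "\<forall>k<J. (\<lambda>x. z x k) \<in> borel_measurable M" and j: "j < J"
  shows "(\<lambda>x. softmax J (z x) j) \<in> borel_measurable M"
proof -
  have "(\<lambda>x. exp (z x k)) \<in> borel_measurable M" if "k < J" for k
    using z that by (intro measurable_compose[OF _ borel_measurable_exp]) simp
  then have [measurable]: "(\<lambda>x. \<Sum>k<J. exp (z x k)) \<in> borel_measurable M"
    by (auto intro!: borel_measurable_sum)
  have [measurable]: "(\<lambda>x. z x j) \<in> borel_measurable M"
    using z j by simp
  show ?thesis
    unfolding softmax_def by measurable
qed

lemma integrable_onehot_loss_sum_softmax:
  assumes G: "finite_measure G" and J: "J \<ge> 1" and z: "\<forall>j<J. (\<lambda>x. z x j) \<in> borel_measurable G"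
    and \<beta>: "0 \<le> 1 + \<beta>" and B: "0 \<le> sdB \<beta> lam"
  shows "integrable G (\<lambda>x. onehot_loss_sum \<beta> lam J (softmax J (z x)))"
proof -
  have "integrable G (\<lambda>x. \<Sum>j<J. 1 * sd_loss \<beta> lam J (onehot j) (softmax J (z x)))"
    using softmax_pos[OF J] sum_softmax[OF J] z \<beta> B
    by (intro integrable_weighted_sd_loss_onehot[OF G])
      (auto simp: in_simplex_def less_imp_le intro: borel_measurable_softmax)
  then show ?thesis unfolding onehot_loss_sum_def by simp
qed

lemma exp_loss_affine_weights:
  assumes "integrable G (\<lambda>x. \<Sum>j<J. q x j * sd_loss \<beta> lam J (onehot j) (p x))"
    and "integrable G (\<lambda>x. onehot_loss_sum \<beta> lam J (p x))"
  shows "exp_loss \<beta> lam J G (\<lambda>x j. c * q x j + a) p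
    = c * exp_loss \<beta> lam J G q p + a * (\<integral>x. onehot_loss_sum \<beta> lam J (p x) \<partial>G)"
proof -
  have "(\<Sum>j<J. (c * q x j + a) * sd_loss \<beta> lam J (onehot j) (p x))
      = c * (\<Sum>j<J. q x j * sd_loss \<beta> lam J (onehot j) (p x))
        + a * onehot_loss_sum \<beta> lam J (p x)" for x
    unfolding onehot_loss_sum_def
    by (simp add: distrib_right sum.distrib sum_distrib_left mult.assoc)
  then show ?thesis
    unfolding exp_loss_def using assms by simp
qed

lemma noisy_prob_affine:
  "noisy_prob J \<eta> q = (\<lambda>j. (1 - \<eta> - \<eta> / (real J - 1)) * q j + \<eta> / (real J - 1))"
  unfolding noisy_prob_def by (rule ext) (simp add: ring_distribs)

lemma noisy_risk_eq:
  assumes G: "finite_measure G" and J: "J \<ge> 1"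
    and pstar: "\<forall>x\<in>space G. in_simplex J (pstar x)" "\<forall>j<J. (\<lambda>x. pstar x j) \<in> borel_measurable G"
    and f: "\<forall>j<J. (\<lambda>x. f \<theta> x j) \<in> borel_measurable G"
    and \<beta>: "0 \<le> 1 + \<beta>" and B: "0 \<le> sdB \<beta> lam"
  shows "noisy_risk \<beta> lam J \<eta> G pstar f \<theta>
    = (1 - \<eta> - \<eta> / (real J - 1)) * risk \<beta> lam J G pstar f \<theta>
      + \<eta> / (real J - 1) * (\<integral>x. onehot_loss_sum \<beta> lam J (softmax J (f \<theta> x)) \<partial>G)"
  unfolding noisy_risk_def risk_def noisy_prob_affine
proof (rule exp_loss_affine_weights)
  show "integrable G (\<lambda>x. \<Sum>j<J. pstar x j * sd_loss \<beta> lam J (onehot j) (softmax J (f \<theta> x)))"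
    using pstar f \<beta> B softmax_pos[OF J] sum_softmax[OF J] in_simplex_bounds
    by (intro integrable_weighted_sd_loss_onehot[OF G])
      (auto simp: in_simplex_def less_imp_le intro: borel_measurable_softmax)
  show "integrable G (\<lambda>x. onehot_loss_sum \<beta> lam J (softmax J (f \<theta> x)))"
    using integrable_onehot_loss_sum_softmax[OF G J f \<beta> B] .
qed

lemma integral_onehot_loss_sum_softmax_diff_le:
  assumes G: "prob_space G" and J: "J \<ge> 1" and \<beta>: "0 \<le> \<beta>"
    and A: "0 < sdA \<beta> lam" and B: "0 < sdB \<beta> lam"
    and z: "\<forall>j<J. (\<lambda>x. z x j) \<in> borel_measurable G" and w: "\<forall>j<J. (\<lambda>x. w x j) \<in> borel_measurable G"
  shows "(\<integral>x. onehot_loss_sum \<beta> lam J (softmax J (z x)) \<partial>G)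
       - (\<integral>x. onehot_loss_sum \<beta> lam J (softmax J (w x)) \<partial>G) \<le> sd_symmetry_gap \<beta> lam J"
proof -
  interpret prob_space G by (rule G)
  have integrable: "integrable G (\<lambda>x. onehot_loss_sum \<beta> lam J (softmax J (v x)))"
    if "\<forall>j<J. (\<lambda>x. v x j) \<in> borel_measurable G" for v
    using integrable_onehot_loss_sum_softmax[OF finite_measure_axioms J that] \<beta> B by simp
  then have int: "integrable G (\<lambda>x. onehot_loss_sum \<beta> lam J (softmax J (z x))
      - onehot_loss_sum \<beta> lam J (softmax J (w x)))"
    using z w by simp
  have "(\<integral>x. onehot_loss_sum \<beta> lam J (softmax J (z x)) \<partial>G)
       - (\<integral>x. onehot_loss_sum \<beta> lam J (softmax J (w x)) \<partial>G)
     = (\<integral>x. onehot_loss_sum \<beta> lam J (softmax J (z x))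
          - onehot_loss_sum \<beta> lam J (softmax J (w x)) \<partial>G)"
    using integrable z w by simp
  also have "\<dots> \<le> sd_symmetry_gap \<beta> lam J"
    using int J \<beta> A B softmax_pos[OF J] sum_softmax[OF J]
    by (intro integral_le_const AE_I2 onehot_loss_sum_diff_le) auto
  finally show ?thesis .
qed

lemma excess_risk_le_of_mixture_minimizer:
  fixes R N S :: "'t \<Rightarrow> real"
  assumes c: "0 < c" and a: "0 \<le> a" and N: "\<forall>\<theta>\<in>\<Theta>. N \<theta> = c * R \<theta> + a * S \<theta>"
    and "\<theta>s \<in> \<Theta>" "\<theta>n \<in> \<Theta>" and min: "\<forall>\<theta>\<in>\<Theta>. N \<theta>n \<le> N \<theta>"
    and S: "S \<theta>s - S \<theta>n \<le> W"
  shows "R \<theta>n - R \<theta>s \<le> a / c * W"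
proof -
  have "c * R \<theta>n + a * S \<theta>n \<le> c * R \<theta>s + a * S \<theta>s"
    using N min \<open>\<theta>s \<in> \<Theta>\<close> \<open>\<theta>n \<in> \<Theta>\<close> by metis
  then have "c * (R \<theta>n - R \<theta>s) \<le> a * (S \<theta>s - S \<theta>n)"
    by (simp add: algebra_simps)
  also have "\<dots> \<le> a * W"
    using S a by (rule mult_left_mono)
  finally show ?thesis
    using c by (simp add: field_simps)
qed

lemma in_TD:
  assumes "in_T \<beta> lam"
  shows "0 \<le> \<beta>" "0 < sdA \<beta> lam" "0 < sdB \<beta> lam"
  using assms by (auto simp: in_T_def sdA_def sdB_def field_simps)

lemma excess_bound_eq:
  assumes "J \<noteq> 1"
  shows "excess_bound \<beta> lam J \<eta>
    = (\<eta> / (real J - 1)) / (1 - \<eta> - \<eta> / (real J - 1)) * sd_symmetry_gap \<beta> lam J"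
proof -
  have "(real J - 1) * (1 - \<eta> - \<eta> / (real J - 1)) = real J - 1 - real J * \<eta>"
    using assms by (simp add: field_simps)
  then have ratio: "(\<eta> / (real J - 1)) / (1 - \<eta> - \<eta> / (real J - 1)) = \<eta> / (real J - 1 - real J * \<eta>)"
    by (metis divide_divide_eq_left)
  show ?thesis
    unfolding excess_bound_def sd_symmetry_gap_def ratio by simp
qed

theorem theorem3:
  fixes G :: "'x measure" and pstar :: "'x \<Rightarrow> nat \<Rightarrow> real"
    and f :: "'t \<Rightarrow> 'x \<Rightarrow> nat \<Rightarrow> real" and \<Theta> :: "'t set"
    and \<beta> lam \<eta> :: real and J :: nat and \<theta>s \<theta>n :: 't
  assumes T: "in_T \<beta> lam"
    and J: "J \<ge> 2"
    and eta: "0 \<le> \<eta>" "\<eta> < 1 - 1 / real J"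
    and G: "prob_space G"
    and pstar_simplex: "\<forall>x\<in>space G. in_simplex J (pstar x)"
    and pstar_meas: "\<forall>j<J. (\<lambda>x. pstar x j) \<in> borel_measurable G"
    and f_meas: "\<forall>\<theta>\<in>\<Theta>. \<forall>j<J. (\<lambda>x. f \<theta> x j) \<in> borel_measurable G"
    and clean_min: "\<theta>s \<in> \<Theta>" "\<forall>\<theta>\<in>\<Theta>. risk \<beta> lam J G pstar f \<theta>s \<le> risk \<beta> lam J G pstar f \<theta>"
    and noisy_min: "\<theta>n \<in> \<Theta>"
      "\<forall>\<theta>\<in>\<Theta>. noisy_risk \<beta> lam J \<eta> G pstar f \<theta>n \<le> noisy_risk \<beta> lam J \<eta> G pstar f \<theta>"
  shows "0 \<le> risk \<beta> lam J G pstar f \<theta>n - risk \<beta> lam J G pstar f \<theta>s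
       \<and> risk \<beta> lam J G pstar f \<theta>n - risk \<beta> lam J G pstar f \<theta>s \<le> excess_bound \<beta> lam J \<eta>"
proof -
  interpret prob_space G by (rule G)
  have J1: "J \<ge> 1" using J by simp
  note \<beta> = in_TD[OF T]
  define a where "a = \<eta> / (real J - 1)"
  define c where "c = 1 - \<eta> - \<eta> / (real J - 1)"
  have "0 < c" using J eta(2) by (simp add: c_def field_simps)
  have "0 \<le> a" using J eta(1) by (simp add: a_def)
  have decomposition: "\<forall>\<theta>\<in>\<Theta>. noisy_risk \<beta> lam J \<eta> G pstar f \<theta>
      = c * risk \<beta> lam J G pstar f \<theta> + a * (\<integral>x. onehot_loss_sum \<beta> lam J (softmax J (f \<theta> x)) \<partial>G)"
    unfolding a_def c_def using f_meas \<beta>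
    by (intro ballI noisy_risk_eq[OF finite_measure_axioms J1 pstar_simplex pstar_meas]) auto
  have spread: "(\<integral>x. onehot_loss_sum \<beta> lam J (softmax J (f \<theta>s x)) \<partial>G)
      - (\<integral>x. onehot_loss_sum \<beta> lam J (softmax J (f \<theta>n x)) \<partial>G) \<le> sd_symmetry_gap \<beta> lam J"
    using f_meas clean_min(1) noisy_min(1)
    by (intro integral_onehot_loss_sum_softmax_diff_le[OF G J1 \<beta>]) auto
  have "risk \<beta> lam J G pstar f \<theta>n - risk \<beta> lam J G pstar f \<theta>s \<le> a / c * sd_symmetry_gap \<beta> lam J"
    using \<open>0 < c\<close> \<open>0 \<le> a\<close> decomposition clean_min(1) noisy_min spread
    by (rule excess_risk_le_of_mixture_minimizer)
  moreover have "a / c * sd_symmetry_gap \<beta> lam J = excess_bound \<beta> lam J \<eta>"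
    using excess_bound_eq[of J] J by (simp add: a_def c_def)
  ultimately show ?thesis
    using clean_min noisy_min(1) by auto
qed

end
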